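(* Let $S$ be a finite set of possibly partial distributions all with total mass $\textsc{Mass}(S)$, let $\textsc{OPT}_S$ be a minimum-entropy coupling of $S$, and let $\textsc{Major-Profile}_S$ be a minimum-entropy possibly partial distribution $d$ (of total mass $\textsc{Mass}(S)$) subject to $\textsc{Sketch}_d(x)\le\textsc{Profile}_S(x)$ for all $x\in(0,\textsc{Mass}(S)]$. Then $$H(\textsc{OPT}_S)\ge H(\textsc{Major-Profile}_S)\ge \max\Big(H(\textsc{Profile}_S),\,H\big(\textstyle\bigwedge S\big)\Big).$$
   Context: A possibly partial distribution $p$ is a vector of nonnegative reals sorted non-increasingly, $p(1)\ge p(2)\ge\cdots$, with total mass $\textsc{Mass}(p)=\sum_j p(j)\le1$; $H(p)=\sum_j p(j)\log_2(1/p(j))$. A coupling of $S=\{p_1,\dots,p_m\}$ is a nonnegative array $\mathcal C(i_1,\dots,i_m)$ whose sum over all tuples with $k$-th coordinate $i_k$ equals $p_k(i_k)$ for all $k,i_k$; $\textsc{OPT}_S$ minimizes entropy among couplings. $\textsc{Sketch}_p(x)=p(i)$ for $x\in(\sum_{j>i}p(j),\sum_{j\ge i}p(j)]$, defined on $(0,\textsc{Mass}(p)]$. $\textsc{Profile}_S(x)=\min_{p\in S}\textsc{Sketch}_p(x)$ and $H(\textsc{Profile}_S)=\int_0^{\textsc{Mass}(S)}\log_2(1/\textsc{Profile}_S(x))\,dx$. $\bigwedge S$ is the distribution defined by $\bigwedge S(i)=\min_{p\in S}\sum_{j=1}^i p(j)-\sum_{j=1}^{i-1}\bigwedge S(j)$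 (the greatest lower bound of $S$ in the majorization order). *)

theory Defs
  imports "HOL-Analysis.Analysis"
begin

text \<open>Distributions are functions nat => real (index 0 is the largest entry).\<close>

definition mass :: "(nat \<Rightarrow> real) \<Rightarrow> real" where
  "mass p = infsum p UNIV"

definition ppd :: "(nat \<Rightarrow> real) \<Rightarrow> bool" where
  "ppd p \<longleftrightarrow> (\<forall>i. 0 \<le> p i) \<and> (\<forall>i. p (Suc i) \<le> p i) \<and> finite {i. p i \<noteq> 0} \<and> mass p \<le> 1"

definition ent :: "('a \<Rightarrow> real) \<Rightarrow> real" where
  "ent f = infsum (\<lambda>x. f x * log 2 (1 / f x)) UNIV"

definition tail :: "(nat \<Rightarrow> real) \<Rightarrow> nat \<Rightarrow> real" where
  "tail p i = infsum p {i..}"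

definition sketch :: "(nat \<Rightarrow> real) \<Rightarrow> real \<Rightarrow> real" where
  "sketch p x = (\<Sum>i\<in>{i. tail p (Suc i) < x \<and> x \<le> tail p i}. p i)"

definition profile :: "(nat \<Rightarrow> real) set \<Rightarrow> real \<Rightarrow> real" where
  "profile S x = Min ((\<lambda>p. sketch p x) ` S)"

definition profile_entropy :: "(nat \<Rightarrow> real) set \<Rightarrow> real \<Rightarrow> real" where
  "profile_entropy S M = integral {0..M} (\<lambda>x. log 2 (1 / profile S x))"

text \<open>Index tuples of a coupling of S: one index per member of S (extensional, 0 outside S).\<close>
definition tuples :: "(nat \<Rightarrow> real) set \<Rightarrow> ((nat \<Rightarrow> real) \<Rightarrow> nat) set" where
  "tuples S = {t. \<forall>q. q \<notin> S \<longrightarrow> t q = 0}"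

definition is_coupling :: "(nat \<Rightarrow> real) set \<Rightarrow> (((nat \<Rightarrow> real) \<Rightarrow> nat) \<Rightarrow> real) \<Rightarrow> bool" where
  "is_coupling S C \<longleftrightarrow> (\<forall>t. 0 \<le> C t) \<and> (\<forall>t. t \<notin> tuples S \<longrightarrow> C t = 0) \<and>
     (\<forall>p\<in>S. \<forall>i. (C has_sum p i) {t \<in> tuples S. t p = i})"

definition major_feasible :: "(nat \<Rightarrow> real) set \<Rightarrow> real \<Rightarrow> (nat \<Rightarrow> real) \<Rightarrow> bool" where
  "major_feasible S M d \<longleftrightarrow> ppd d \<and> mass d = M \<and> (\<forall>x\<in>{0<..M}. sketch d x \<le> profile S x)"

function meet :: "(nat \<Rightarrow> real) set \<Rightarrow> nat \<Rightarrow> real" where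
  "meet S i = Min ((\<lambda>p. \<Sum>j\<le>i. p j) ` S) - (\<Sum>j<i. meet S j)"
  by auto
termination by (relation "Wellfounded.measure snd") auto

end

theory Submission
  imports Defs "HOL-Library.Multiset"
begin

text \<open>
  Sorting the entries of a coupling of \<open>S\<close> gives a distribution with the entropy of the
  coupling whose sketch lies below the sketch of every marginal: the cell of a marginal value
  \<open>p i\<close> is covered by coupling atoms of weight at most \<open>p i\<close>. So it is feasible for
  Major-Profile, and \<open>H(OPT) \<ge> H(Major-Profile)\<close>.

  The entropy of a distribution \<open>d\<close> is the integral of \<open>log (1 / Sketch_d)\<close> over
  \<open>(0, Mass]\<close>; feasibility means \<open>Sketch_d \<le> Profile_S\<close>, whence \<open>H(d) \<ge> H(Profile_S)\<close>.

  Finally \<open>Sketch_d \<le> Sketch_p\<close> forces each prefix sum of \<open>d\<close> below that of \<open>p\<close>, hence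
  below that of \<open>\<And>S\<close>. Both have the same mass, so \<open>\<And>S\<close> majorizes \<open>d\<close>, and Schur
  concavity of entropy (Gibbs' inequality plus Abel summation) gives \<open>H(d) \<ge> H(\<And>S)\<close>.
\<close>

lemma infsum_eq_sum_superset:
  fixes f :: "'a \<Rightarrow> real"
  assumes "finite B" "B \<subseteq> A" "\<And>x. x \<in> A - B \<Longrightarrow> f x = 0"
  shows "infsum f A = sum f B"
proof -
  have "infsum f A = infsum f B"
    by (rule infsum_cong_neutral) (use assms in auto)
  then show ?thesis using assms by simp
qed

lemma ppd_nonneg: "ppd p \<Longrightarrow> 0 \<le> p i"
  by (simp add: ppd_def)

lemma ppd_antimono:
  assumes "ppd p" "i \<le> j"
  shows "p j \<le> p i"
  using assms(2)
proof (induction j rule: dec_induct)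
  case (step j)
  then show ?case using assms(1) unfolding ppd_def by (meson order_trans)
qed simp

lemma ppd_eventually_zero:
  assumes "ppd p"
  obtains N where "\<And>i. N \<le> i \<Longrightarrow> p i = 0"
proof -
  have "finite {i. p i \<noteq> 0}" using assms by (simp add: ppd_def)
  then obtain N where "\<forall>i\<in>{i. p i \<noteq> 0}. i < N"
    by (meson finite_nat_set_iff_bounded)
  then show ?thesis using that by (metis linorder_not_less mem_Collect_eq)
qed

lemma ppd_positive_prefix:
  assumes "ppd p"
  obtains n where "\<And>i. i < n \<Longrightarrow> 0 < p i" "\<And>i. n \<le> i \<Longrightarrow> p i = 0"
proof -
  obtain N where N: "\<And>i. N \<le> i \<Longrightarrow> p i = 0" using ppd_eventually_zero[OF assms] by blast
  define n where "n = (LEAST i. p i = 0)"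
  have "p n = 0" unfolding n_def by (rule LeastI[of _ N]) (simp add: N)
  then have "p i = 0" if "n \<le> i" for i
    using ppd_antimono[OF assms that] ppd_nonneg[OF assms, of i] by simp
  moreover have "0 < p i" if "i < n" for i
    using not_less_Least[of i "\<lambda>i. p i = 0"] that ppd_nonneg[OF assms, of i] by (simp add: n_def)
  ultimately show ?thesis using that by blast
qed

lemma tail_eq_sum:
  assumes "\<And>i. N \<le> i \<Longrightarrow> p i = 0"
  shows "tail p i = (\<Sum>j=i..<N. p j)"
  unfolding tail_def by (rule infsum_eq_sum_superset) (use assms in auto)

lemma mass_eq_sum:
  assumes "\<And>i. N \<le> i \<Longrightarrow> p i = 0"
  shows "mass p = (\<Sum>j<N. p j)"
  unfolding mass_def by (rule infsum_eq_sum_superset) (use assms in auto)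

lemma tail_0: "tail p 0 = mass p"
  by (simp add: tail_def mass_def)

lemma tail_nonneg: "ppd p \<Longrightarrow> 0 \<le> tail p i"
  unfolding tail_def by (intro infsum_nonneg) (simp add: ppd_nonneg)

lemma tail_eq_0:
  assumes "\<And>i. N \<le> i \<Longrightarrow> p i = 0" "N \<le> i"
  shows "tail p i = 0"
  using tail_eq_sum[OF assms(1)] assms(2) by simp

lemma tail_Suc:
  assumes "ppd p"
  shows "tail p i = p i + tail p (Suc i)"
proof -
  obtain N where N: "\<And>i. N \<le> i \<Longrightarrow> p i = 0" using ppd_eventually_zero[OF assms] by blast
  show ?thesis
  proof (cases "i < N")
    case True
    then show ?thesis by (simp add: tail_eq_sum[OF N] sum.atLeast_Suc_lessThan)
  qed (simp add: tail_eq_sum[OF N] N)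
qed

lemma tail_antimono:
  assumes "ppd p" "i \<le> j"
  shows "tail p j \<le> tail p i"
  using assms(2)
proof (induction j rule: dec_induct)
  case (step j)
  then show ?case using tail_Suc[OF assms(1), of j] ppd_nonneg[OF assms(1), of j] by linarith
qed simp

lemma ppd_le_mass:
  assumes "ppd p"
  shows "p i \<le> mass p"
  using tail_Suc[OF assms, of i] tail_nonneg[OF assms, of "Suc i"] tail_antimono[OF assms, of 0 i]
  by (simp add: tail_0)

lemma sum_lessThan_eq_mass_minus_tail:
  assumes "ppd p"
  shows "(\<Sum>j<k. p j) = mass p - tail p k"
proof (induction k)
  case (Suc k)
  then show ?case using tail_Suc[OF assms, of k] by simp
qed (simp add: tail_0)

lemma sketch_cell_unique:
  assumes "ppd p" "tail p (Suc i) < x" "x \<le> tail p i" "tail p (Suc j) < x" "x \<le> tail p j"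
  shows "j = i"
proof (rule ccontr)
  assume "j \<noteq> i"
  then have "Suc j \<le> i \<or> Suc i \<le> j" by linarith
  then show False
    using tail_antimono[OF assms(1), of "Suc j" i] tail_antimono[OF assms(1), of "Suc i" j] assms
    by auto
qed

lemma sketch_eq:
  assumes "ppd p" "tail p (Suc i) < x" "x \<le> tail p i"
  shows "sketch p x = p i"
proof -
  have "{j. tail p (Suc j) < x \<and> x \<le> tail p j} = {i}"
    using sketch_cell_unique[OF assms] assms(2,3) by blast
  then show ?thesis unfolding sketch_def by simp
qed

lemma sketch_cell_exists:
  assumes "ppd p" "0 < x" "x \<le> mass p"
  obtains i where "tail p (Suc i) < x" "x \<le> tail p i"
proof -
  obtain N where N: "\<And>i. N \<le> i \<Longrightarrow> p i = 0" using ppd_eventually_zero[OF assms(1)] by blast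
  define j where "j = (LEAST j. tail p j < x)"
  have "tail p j < x"
    unfolding j_def by (rule LeastI[of _ N]) (simp add: tail_eq_0[OF N] assms(2))
  moreover have "j \<noteq> 0" using calculation assms(3) tail_0[of p] by (metis not_le)
  then obtain i where i: "j = Suc i" using not0_implies_Suc by blast
  moreover have "\<not> tail p i < x" using not_less_Least[of i "\<lambda>j. tail p j < x"] i j_def by simp
  ultimately show ?thesis using that[of i] by simp
qed

lemma sketch_le_of_le_tail:
  assumes "ppd p" "0 < x" "x \<le> tail p k"
  shows "sketch p x \<le> p k"
proof -
  have "x \<le> mass p" using assms(3) tail_antimono[OF assms(1), of 0 k] by (simp add: tail_0)
  then obtain i where i: "tail p (Suc i) < x" "x \<le> tail p i"
    using sketch_cell_exists assms(1,2) by blast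
  have "k \<le> i"
    using tail_antimono[OF assms(1), of "Suc i" k] i assms(3) by (meson not_less_eq_eq not_le order_trans)
  then show ?thesis using sketch_eq[OF assms(1) i] ppd_antimono[OF assms(1)] by simp
qed

lemma sketch_ge_of_tail_less:
  assumes "ppd p" "x \<le> mass p" "tail p (Suc k) < x"
  shows "p k \<le> sketch p x"
proof -
  have "0 < x" using tail_nonneg[OF assms(1), of "Suc k"] assms(3) by simp
  then obtain i where i: "tail p (Suc i) < x" "x \<le> tail p i"
    using sketch_cell_exists assms(1,2) by blast
  have "i \<le> k"
    using tail_antimono[OF assms(1), of "Suc k" i] i assms(3) by (meson not_less_eq_eq not_le order_trans)
  then show ?thesis using sketch_eq[OF assms(1) i] ppd_antimono[OF assms(1)] by simp
qed

lemma sketch_pos: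
  assumes "ppd p" "0 < x" "x \<le> mass p"
  shows "0 < sketch p x"
proof -
  obtain i where i: "tail p (Suc i) < x" "x \<le> tail p i"
    using sketch_cell_exists assms by blast
  then show ?thesis using sketch_eq[OF assms(1) i] tail_Suc[OF assms(1), of i] by simp
qed

lemma sketch_0:
  assumes "ppd p"
  shows "sketch p 0 = 0"
proof -
  have "{i. tail p (Suc i) < 0 \<and> 0 \<le> tail p i} = {}"
    using tail_nonneg[OF assms] by (auto simp: not_less)
  then show ?thesis unfolding sketch_def by (simp only: sum.empty)
qed

lemma sketch_le_of_le_sum_below:
  assumes "ppd q" "0 \<le> v" "0 < x" "x \<le> infsum (\<lambda>j. if q j \<le> v then q j else 0) UNIV"
  shows "sketch q x \<le> v"
proof -
  obtain N where N: "\<And>i. N \<le> i \<Longrightarrow> q i = 0" using ppd_eventually_zero[OF assms(1)] by blast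
  define k where "k = (LEAST k. q k \<le> v)"
  have qk: "q k \<le> v" unfolding k_def by (rule LeastI[of _ N]) (simp add: N assms(2))
  have below: "q j \<le> v \<longleftrightarrow> k \<le> j" for j
    using not_less_Least[of j "\<lambda>k. q k \<le> v"] ppd_antimono[OF assms(1), of k j] qk
    by (fastforce simp: k_def[symmetric])
  have "infsum (\<lambda>j. if q j \<le> v then q j else 0) UNIV = tail q k"
    unfolding tail_def by (rule infsum_cong_neutral) (auto simp: below)
  then have "sketch q x \<le> q k" using sketch_le_of_le_tail[OF assms(1,3)] assms(4) by simp
  then show ?thesis using qk by simp
qed

lemma sum_lessThan_le_of_sketch_le:
  assumes d: "ppd d" and p: "ppd p" and mass: "mass d = mass p"
    and dom: "\<forall>x\<in>{0<..mass p}. sketch d x \<le> sketch p x"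
  shows "(\<Sum>j<k. d j) \<le> (\<Sum>j<k. p j)"
proof -
  have "tail p k \<le> tail d k"
  proof (induction k)
    case 0
    then show ?case using mass by (simp add: tail_0)
  next
    case (Suc k)
    show ?case
    proof (rule ccontr)
      assume less: "\<not> tail p (Suc k) \<le> tail d (Suc k)"
      define x where "x = tail p (Suc k)"
      have "p k < d k" using Suc less tail_Suc[OF d, of k] tail_Suc[OF p, of k] by linarith
      have x: "0 < x" "x \<le> mass p"
        using less tail_nonneg[OF d, of "Suc k"] tail_antimono[OF p, of 0 "Suc k"]
        by (auto simp: x_def tail_0)
      have "sketch p x \<le> p k"
        using sketch_le_of_le_tail[OF p x(1), of "Suc k"] ppd_antimono[OF p, of k "Suc k"] x_def by simp
      also have "\<dots> < d k" by fact
      also have "\<dots> \<le> sketch d x"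
        using sketch_ge_of_tail_less[OF d] x(2) mass less x_def by simp
      finally have "sketch p x < sketch d x" .
      moreover have "sketch d x \<le> sketch p x" using dom x by simp
      ultimately show False by simp
    qed
  qed
  then show ?thesis using sum_lessThan_eq_mass_minus_tail[OF d] sum_lessThan_eq_mass_minus_tail[OF p] mass
    by simp
qed

lemma length_sorted_list_of_multiset: "length (sorted_list_of_multiset M) = size M"
  by (metis size_mset mset_sorted_list_of_multiset)

definition decreasing_rearrangement :: "('a \<Rightarrow> real) \<Rightarrow> nat \<Rightarrow> real" where
  "decreasing_rearrangement C i =
     (let xs = rev (sorted_list_of_multiset (image_mset C (mset_set {t. C t \<noteq> 0})))
      in if i < length xs then xs ! i else 0)"

lemma decreasing_rearrangement_eq_0:
  "card {t. C t \<noteq> 0} \<le> i \<Longrightarrow> decreasing_rearrangement C i = 0"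
  by (simp add: decreasing_rearrangement_def length_sorted_list_of_multiset)

lemma sum_decreasing_rearrangement:
  "(\<Sum>i<card {t. C t \<noteq> 0}. f (decreasing_rearrangement C i)) = (\<Sum>t | C t \<noteq> 0. f (C t))"
proof -
  define xs where "xs = rev (sorted_list_of_multiset (image_mset C (mset_set {t. C t \<noteq> 0})))"
  have len: "length xs = card {t. C t \<noteq> 0}" by (simp add: xs_def length_sorted_list_of_multiset)
  have "(\<Sum>i<card {t. C t \<noteq> 0}. f (decreasing_rearrangement C i)) = (\<Sum>i<length xs. f (xs ! i))"
    by (rule sum.cong) (auto simp: decreasing_rearrangement_def xs_def[symmetric] len)
  also have "\<dots> = sum_list (map f xs)"
    by (simp add: sum_list_sum_nth atLeast0LessThan)
  also have "\<dots> = sum_mset (image_mset f (mset xs))"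
    by (metis mset_map sum_mset_sum_list)
  also have "\<dots> = (\<Sum>t | C t \<noteq> 0. f (C t))"
    by (simp add: xs_def sum_unfold_sum_mset[of "\<lambda>t. f (C t)"] multiset.map_comp comp_def)
  finally show ?thesis .
qed

lemma infsum_decreasing_rearrangement:
  fixes f :: "real \<Rightarrow> real"
  assumes "finite {t. C t \<noteq> 0}" "f 0 = 0"
  shows "infsum (\<lambda>i. f (decreasing_rearrangement C i)) UNIV = infsum (\<lambda>t. f (C t)) UNIV"
proof -
  have "infsum (\<lambda>i. f (decreasing_rearrangement C i)) UNIV
      = (\<Sum>i<card {t. C t \<noteq> 0}. f (decreasing_rearrangement C i))"
    by (rule infsum_eq_sum_superset) (auto simp: decreasing_rearrangement_eq_0 assms(2) not_less)
  also have "\<dots> = infsum (\<lambda>t. f (C t)) UNIV"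
    unfolding sum_decreasing_rearrangement
    by (rule infsum_eq_sum_superset[symmetric]) (use assms in auto)
  finally show ?thesis .
qed

lemma decreasing_rearrangement_nonneg:
  assumes "\<And>t. 0 \<le> C t"
  shows "0 \<le> decreasing_rearrangement C i"
proof -
  define xs where "xs = rev (sorted_list_of_multiset (image_mset C (mset_set {t. C t \<noteq> 0})))"
  have "set xs \<subseteq> range C"
    unfolding xs_def by auto
  then have "0 \<le> y" if "y \<in> set xs" for y
    using that assms by auto
  then show ?thesis
    by (simp add: decreasing_rearrangement_def xs_def[symmetric] Let_def)
qed

lemma decreasing_rearrangement_Suc_le:
  assumes "\<And>t. 0 \<le> C t"
  shows "decreasing_rearrangement C (Suc i) \<le> decreasing_rearrangement C i"
proof -
  define xs where "xs = rev (sorted_list_of_multiset (image_mset C (mset_set {t. C t \<noteq> 0})))"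
  have "sorted_wrt (\<ge>) xs" by (simp add: xs_def sorted_wrt_rev)
  then have "xs ! Suc i \<le> xs ! i" if "Suc i < length xs"
    using sorted_wrt_nth_less[OF \<open>sorted_wrt (\<ge>) xs\<close>, where i=i and j="Suc i"] that by simp
  then show ?thesis
    using decreasing_rearrangement_nonneg[of C i, OF assms]
    by (auto simp: decreasing_rearrangement_def xs_def[symmetric] Let_def)
qed

lemma ppd_decreasing_rearrangement:
  assumes "\<And>t. 0 \<le> C t" "finite {t. C t \<noteq> 0}" "infsum C UNIV \<le> 1"
  shows "ppd (decreasing_rearrangement C)"
proof -
  have "finite {i. decreasing_rearrangement C i \<noteq> 0}"
    by (rule finite_subset[of _ "{..<card {t. C t \<noteq> 0}}"])
      (use decreasing_rearrangement_eq_0[of C] in \<open>force simp flip: not_le\<close>)+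
  moreover have "mass (decreasing_rearrangement C) = infsum C UNIV"
    unfolding mass_def using infsum_decreasing_rearrangement[OF assms(2), of "\<lambda>y. y"] by simp
  ultimately show ?thesis
    using assms by (simp add: ppd_def decreasing_rearrangement_nonneg decreasing_rearrangement_Suc_le)
qed

lemma coupling_le_marginal:
  assumes "is_coupling S C" "p \<in> S"
  shows "C t \<le> p (t p)"
proof -
  have marginal: "(C has_sum p (t p)) {t' \<in> tuples S. t' p = t p}"
    using assms by (simp add: is_coupling_def)
  show ?thesis
  proof (cases "t \<in> tuples S")
    case True
    have "(C has_sum C t) {t}" using has_sum_finite[of "{t}" C] by simp
    then show ?thesis
      by (rule has_sum_mono_neutral[OF _ marginal]) (use True assms(1) in \<open>auto simp: is_coupling_def\<close>)
  next
    case False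
    then show ?thesis
      using assms(1) has_sum_nonneg[OF marginal] by (simp add: is_coupling_def)
  qed
qed

lemma finite_coupling_support:
  assumes cp: "is_coupling S C" and "finite S" and "\<forall>p\<in>S. ppd p"
  shows "finite {t. C t \<noteq> 0}"
proof -
  define extend where "extend t = (\<lambda>q. if q \<in> S then t q else (0::nat))"
    for t :: "(nat \<Rightarrow> real) \<Rightarrow> nat"
  have "{t. C t \<noteq> 0} \<subseteq> extend ` (PiE S (\<lambda>q. {i. q i \<noteq> 0}))"
  proof
    fix t assume "t \<in> {t. C t \<noteq> 0}"
    then have "0 < C t" "t \<in> tuples S" using cp by (auto simp: is_coupling_def order_le_less)
    then have "q (t q) \<noteq> 0" if "q \<in> S" for q
      using coupling_le_marginal[OF cp that, of t] by linarith
    then have "restrict t S \<in> PiE S (\<lambda>q. {i. q i \<noteq> 0})"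
      by (simp add: restrict_PiE_iff)
    moreover have "t = extend (restrict t S)"
      using \<open>t \<in> tuples S\<close> by (auto simp: extend_def tuples_def)
    ultimately show "t \<in> extend ` (PiE S (\<lambda>q. {i. q i \<noteq> 0}))" by blast
  qed
  moreover have "finite (PiE S (\<lambda>q. {i. q i \<noteq> 0}))"
    using assms by (intro finite_PiE) (auto simp: ppd_def)
  ultimately show ?thesis by (meson finite_imageI finite_subset)
qed

lemma sum_marginal_eq_sum_coupling:
  assumes cp: "is_coupling S C" and fin: "finite {t. C t \<noteq> 0}" and "p \<in> S" and "finite A"
  shows "(\<Sum>i\<in>A. p i) = (\<Sum>t | C t \<noteq> 0 \<and> t p \<in> A. C t)"
proof -
  have "p i = (\<Sum>t | C t \<noteq> 0 \<and> t p = i. C t)" for i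
  proof -
    have "(C has_sum p i) {t \<in> tuples S. t p = i}" using cp assms(3) by (simp add: is_coupling_def)
    then have "p i = infsum C {t \<in> tuples S. t p = i}" by (simp add: infsumI)
    also have "\<dots> = (\<Sum>t | C t \<noteq> 0 \<and> t p = i. C t)"
      by (rule infsum_eq_sum_superset) (use fin cp in \<open>auto simp: is_coupling_def\<close>)
    finally show ?thesis .
  qed
  moreover have "{t \<in> {t. C t \<noteq> 0 \<and> t p \<in> A}. t p = i} = {t. C t \<noteq> 0 \<and> t p = i}" if "i \<in> A" for i
    using that by auto
  ultimately have "(\<Sum>i\<in>A. p i) = (\<Sum>i\<in>A. \<Sum>t \<in> {t \<in> {t. C t \<noteq> 0 \<and> t p \<in> A}. t p = i}. C t)"
    by simp
  also have "\<dots> = (\<Sum>t | C t \<noteq> 0 \<and> t p \<in> A. C t)"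
    by (rule sum.group) (use fin assms(4) in auto)
  finally show ?thesis .
qed

lemma mass_marginal_eq_infsum_coupling:
  assumes cp: "is_coupling S C" and fin: "finite {t. C t \<noteq> 0}" and p: "p \<in> S" "ppd p"
  shows "mass p = infsum C UNIV"
proof -
  obtain N where N: "\<And>i. N \<le> i \<Longrightarrow> p i = 0" using ppd_eventually_zero[OF p(2)] by blast
  have "t p < N" if "C t \<noteq> 0" for t
  proof (rule ccontr)
    assume "\<not> t p < N"
    then have "C t \<le> 0" using coupling_le_marginal[OF cp p(1), of t] N[of "t p"] by simp
    moreover have "0 \<le> C t" using cp by (simp add: is_coupling_def)
    ultimately show False using that by simp
  qed
  then have "{t. C t \<noteq> 0 \<and> t p \<in> {..<N}} = {t. C t \<noteq> 0}" by auto
  then have "mass p = (\<Sum>t | C t \<noteq> 0. C t)"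
    using mass_eq_sum[OF N] sum_marginal_eq_sum_coupling[OF cp fin p(1), of "{..<N}"] by simp
  also have "\<dots> = infsum C UNIV"
    by (rule infsum_eq_sum_superset[symmetric]) (use fin in auto)
  finally show ?thesis .
qed

lemma tail_marginal_le_infsum_coupling_below:
  assumes cp: "is_coupling S C" and fin: "finite {t. C t \<noteq> 0}" and p: "p \<in> S" "ppd p"
  shows "tail p i \<le> infsum (\<lambda>t. if C t \<le> p i then C t else 0) UNIV"
proof -
  obtain N where N: "\<And>i. N \<le> i \<Longrightarrow> p i = 0" using ppd_eventually_zero[OF p(2)] by blast
  have "tail p i = (\<Sum>t | C t \<noteq> 0 \<and> t p \<in> {i..<N}. C t)"
    using tail_eq_sum[OF N] sum_marginal_eq_sum_coupling[OF cp fin p(1), of "{i..<N}"] by simp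
  also have "\<dots> \<le> (\<Sum>t | C t \<noteq> 0 \<and> C t \<le> p i. C t)"
  proof (rule sum_mono2)
    show "finite {t. C t \<noteq> 0 \<and> C t \<le> p i}" using fin by (simp add: finite_subset)
    show "{t. C t \<noteq> 0 \<and> t p \<in> {i..<N}} \<subseteq> {t. C t \<noteq> 0 \<and> C t \<le> p i}"
    proof
      fix t assume "t \<in> {t. C t \<noteq> 0 \<and> t p \<in> {i..<N}}"
      then show "t \<in> {t. C t \<noteq> 0 \<and> C t \<le> p i}"
        using coupling_le_marginal[OF cp p(1), of t] ppd_antimono[OF p(2), of i "t p"] by simp
    qed
  qed (use cp in \<open>simp add: is_coupling_def\<close>)
  also have "\<dots> = (\<Sum>t | C t \<noteq> 0 \<and> C t \<le> p i. if C t \<le> p i then C t else 0)"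
    by simp
  also have "\<dots> = infsum (\<lambda>t. if C t \<le> p i then C t else 0) UNIV"
    by (rule infsum_eq_sum_superset[symmetric]) (use fin in \<open>auto simp: finite_subset\<close>)
  finally show ?thesis .
qed

lemma ent_decreasing_rearrangement:
  assumes "finite {t. C t \<noteq> 0}"
  shows "ent (decreasing_rearrangement C) = ent C"
  unfolding ent_def by (rule infsum_decreasing_rearrangement[OF assms]) simp

lemma major_feasible_decreasing_rearrangement:
  assumes fS: "finite S" and "S \<noteq> {}" and S: "\<forall>p\<in>S. ppd p \<and> mass p = M"
    and cp: "is_coupling S C"
  shows "major_feasible S M (decreasing_rearrangement C)"
proof -
  define D where "D = decreasing_rearrangement C"
  have fin: "finite {t. C t \<noteq> 0}" using finite_coupling_support[OF cp fS] S by blast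
  have nonneg: "\<And>t. 0 \<le> C t" using cp by (simp add: is_coupling_def)
  obtain p0 where "p0 \<in> S" using \<open>S \<noteq> {}\<close> by blast
  then have "infsum C UNIV = M" "M \<le> 1"
    using S mass_marginal_eq_infsum_coupling[OF cp fin] by (auto simp: ppd_def)
  then have D: "ppd D" "mass D = M"
    using ppd_decreasing_rearrangement[OF nonneg fin] infsum_decreasing_rearrangement[OF fin, of "\<lambda>y. y"]
    by (simp_all add: D_def mass_def)
  have "sketch D x \<le> sketch p x" if x: "0 < x" "x \<le> M" and p: "p \<in> S" for x p
  proof -
    have pp: "ppd p" "mass p = M" using S p by auto
    then obtain i where i: "tail p (Suc i) < x" "x \<le> tail p i"
      using sketch_cell_exists x by metis
    have "x \<le> infsum (\<lambda>t. if C t \<le> p i then C t else 0) UNIV"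
      using i(2) tail_marginal_le_infsum_coupling_below[OF cp fin p pp(1), of i] by linarith
    also have "\<dots> = infsum (\<lambda>j. if D j \<le> p i then D j else 0) UNIV"
      unfolding D_def by (rule infsum_decreasing_rearrangement[symmetric, OF fin]) simp
    finally have "sketch D x \<le> p i"
      using sketch_le_of_le_sum_below[OF D(1) ppd_nonneg[OF pp(1)] x(1)] by blast
    then show ?thesis using sketch_eq[OF pp(1) i] by simp
  qed
  then show ?thesis
    unfolding major_feasible_def profile_def D_def[symmetric]
    using D fS \<open>S \<noteq> {}\<close> by (auto intro!: Min.boundedI)
qed

lemma ent_eq_sum:
  fixes d :: "nat \<Rightarrow> real"
  assumes "\<And>i. N \<le> i \<Longrightarrow> d i = 0"
  shows "ent d = (\<Sum>i<N. d i * log 2 (1 / d i))"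
  unfolding ent_def by (rule infsum_eq_sum_superset) (auto simp: assms not_less)

lemma ent_nonneg:
  assumes "ppd d"
  shows "0 \<le> ent d"
  unfolding ent_def
proof (rule infsum_nonneg)
  fix i
  have "d i \<le> 1" using ppd_le_mass[OF assms, of i] assms by (simp add: ppd_def)
  then show "0 \<le> d i * log 2 (1 / d i)"
    using ppd_nonneg[OF assms, of i] by (cases "d i = 0") simp_all
qed

lemma has_integral_indicator_Ioc:
  fixes a b l u K :: real
  assumes "l \<le> a" "a \<le> b" "b \<le> u"
  shows "((\<lambda>x. if a < x \<and> x \<le> b then K else 0) has_integral (K * (b - a))) {l..u}"
proof -
  have "((\<lambda>x. K) has_integral (K * (b - a))) {a..b}"
    using has_integral_const_real[of K a b] assms by (simp add: mult.commute)
  then have "((\<lambda>x. if x \<in> {a..b} then K else 0) has_integral (K * (b - a))) {l..u}"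
    using has_integral_restrict[of "{a..b}" "{l..u}" "\<lambda>x. K"] assms by auto
  then show ?thesis
    by (rule has_integral_spike_finite[where S="{a}", rotated 2]) auto
qed

lemma has_integral_log_inverse_sketch:
  assumes pd: "ppd d"
  shows "((\<lambda>x. log 2 (1 / sketch d x)) has_integral ent d) {0..mass d}"
proof -
  obtain N where N: "\<And>i. N \<le> i \<Longrightarrow> d i = 0" using ppd_eventually_zero[OF pd] by blast
  define cell where "cell x i \<longleftrightarrow> tail d (Suc i) < x \<and> x \<le> tail d i" for x i
  define step where "step x = (\<Sum>i<N. if cell x i then log 2 (1 / d i) else 0)" for x
  have "(step has_integral (\<Sum>i<N. log 2 (1 / d i) * (tail d i - tail d (Suc i)))) {0..mass d}"
    unfolding step_def cell_def
  proof (rule has_integral_sum)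
    fix i
    show "((\<lambda>x. if tail d (Suc i) < x \<and> x \<le> tail d i then log 2 (1 / d i) else 0) has_integral
        log 2 (1 / d i) * (tail d i - tail d (Suc i))) {0..mass d}"
      using tail_nonneg[OF pd, of "Suc i"] tail_antimono[OF pd, of i "Suc i"] tail_antimono[OF pd, of 0 i]
      by (intro has_integral_indicator_Ioc) (auto simp: tail_0)
  qed simp
  moreover have "log 2 (1 / d i) * (tail d i - tail d (Suc i)) = d i * log 2 (1 / d i)" for i
    using tail_Suc[OF pd, of i] by simp
  ultimately have "(step has_integral ent d) {0..mass d}"
    by (simp add: ent_eq_sum[OF N])
  moreover have "log 2 (1 / sketch d x) = step x" if "x \<in> {0..mass d} - {0}" for x
  proof -
    have "0 < x" "x \<le> mass d" using that by auto
    then obtain i where i: "cell x i"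
      using sketch_cell_exists[OF pd] unfolding cell_def by metis
    have "i < N"
    proof (rule ccontr)
      assume "\<not> i < N"
      then have "tail d i = 0" using tail_eq_0[OF N] by simp
      then show False using i \<open>0 < x\<close> by (simp add: cell_def)
    qed
    have unique: "j = i" if "cell x j" for j
      using sketch_cell_unique[OF pd] i that unfolding cell_def by blast
    have "step x = (\<Sum>j\<in>{i}. if cell x j then log 2 (1 / d j) else 0)"
      unfolding step_def by (rule sum.mono_neutral_right) (use \<open>i < N\<close> unique in auto)
    moreover have "sketch d x = d i" using sketch_eq[OF pd] i unfolding cell_def by blast
    ultimately show ?thesis using i by simp
  qed
  ultimately show ?thesis
    using has_integral_spike_finite[of "{0}" "{0..mass d}" "\<lambda>x. log 2 (1 / sketch d x)" step] by blast
qed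

lemma profile_le_sketch: "finite S \<Longrightarrow> p \<in> S \<Longrightarrow> profile S x \<le> sketch p x"
  unfolding profile_def by simp

lemma profile_0:
  assumes "finite S" "S \<noteq> {}" "\<forall>p\<in>S. ppd p"
  shows "profile S 0 = 0"
  unfolding profile_def using assms sketch_0 by (simp add: image_constant_conv cong: image_cong)

lemma profile_entropy_le_ent:
  assumes S: "finite S" "S \<noteq> {}" "\<forall>p\<in>S. ppd p" and "major_feasible S M d"
  shows "profile_entropy S M \<le> ent d"
proof -
  have d: "ppd d" "mass d = M" and dom: "\<forall>x\<in>{0<..M}. sketch d x \<le> profile S x"
    using assms(4) by (auto simp: major_feasible_def)
  have le: "log 2 (1 / profile S x) \<le> log 2 (1 / sketch d x)" if "x \<in> {0..M}" for x
  proof (cases "x = 0")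
    case True
    then show ?thesis using profile_0[OF S] sketch_0[OF d(1)] by simp
  next
    case False
    then have "0 < sketch d x" "sketch d x \<le> profile S x"
      using that sketch_pos[OF d(1)] dom d(2) by auto
    then show ?thesis by (simp add: frac_le)
  qed
  have ent: "((\<lambda>x. log 2 (1 / sketch d x)) has_integral ent d) {0..M}"
    using has_integral_log_inverse_sketch[OF d(1)] d(2) by simp
  show ?thesis
  proof (cases "(\<lambda>x. log 2 (1 / profile S x)) integrable_on {0..M}")
    case True
    then show ?thesis
      unfolding profile_entropy_def integral_unique[OF ent, symmetric]
      using integral_le[OF True has_integral_integrable[OF ent] le] by simp
  next
    case False
    then show ?thesis
      unfolding profile_entropy_def using ent_nonneg[OF d(1)] by (simp add: not_integrable_integral)
  qed
qed

lemma entropy_term_le_cross_entropy_term: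
  fixes q d :: real
  assumes "0 < d" "0 \<le> q"
  shows "q * log 2 (1 / q) \<le> q * log 2 (1 / d) + (d - q) / ln 2"
proof (cases "q = 0")
  case True
  then show ?thesis using assms by simp
next
  case False
  then have q: "0 < q" using assms by simp
  have "q * ln (d / q) \<le> q * (d / q - 1)"
    using ln_le_minus_one[of "d / q"] q assms by (simp add: mult_left_mono)
  also have "\<dots> = d - q" using q by (simp add: field_simps)
  finally have "q * ln (1 / q) \<le> q * ln (1 / d) + (d - q)"
    using q assms by (simp add: ln_div algebra_simps)
  then have "q * ln (1 / q) / ln 2 \<le> (q * ln (1 / d) + (d - q)) / ln 2"
    by (simp add: divide_right_mono)
  then show ?thesis by (simp add: log_def add_divide_distrib)
qed

lemma sum_entropy_le_of_majorized:
  fixes d q :: "nat \<Rightarrow> real"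
  assumes pos: "\<And>i. i < n \<Longrightarrow> 0 < d i" and mono: "\<And>i. Suc i < n \<Longrightarrow> d (Suc i) \<le> d i"
    and nonneg: "\<And>i. i < n \<Longrightarrow> 0 \<le> q i" and total: "(\<Sum>i<n. q i) = (\<Sum>i<n. d i)"
    and prefix: "\<And>k. k \<le> n \<Longrightarrow> (\<Sum>i<k. d i) \<le> (\<Sum>i<k. q i)"
  shows "(\<Sum>i<n. q i * log 2 (1 / q i)) \<le> (\<Sum>i<n. d i * log 2 (1 / d i))"
proof -
  \<comment> \<open>Gibbs' inequality against \<open>d\<close> reduces the claim to \<open>\<Sum>i<n. (q i - d i) * c i \<le> 0\<close>,
    which is Abel summation: \<open>c\<close> is nondecreasing and the partial sums \<open>E\<close> of \<open>q - d\<close> are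
    nonnegative and vanish at \<open>n\<close>.\<close>
  define c where "c i = log 2 (1 / d i)" for i
  define E where "E k = (\<Sum>i<k. q i - d i)" for k
  have E_nonneg: "0 \<le> E k" if "k \<le> n" for k
    using prefix[OF that] by (simp add: E_def sum_subtractf)
  have c_mono: "c k \<le> c (Suc k)" if "Suc k < n" for k
    using pos[of k] pos[of "Suc k"] mono[OF that] that unfolding c_def
    by (intro log_mono) (simp_all add: frac_le)
  have abel: "(\<Sum>i<Suc k. (q i - d i) * c i) \<le> E (Suc k) * c k" if "k < n" for k
    using that
  proof (induction k)
    case 0
    then show ?case by (simp add: E_def)
  next
    case (Suc k)
    have "(\<Sum>i<Suc (Suc k). (q i - d i) * c i)
        \<le> E (Suc k) * c k + (q (Suc k) - d (Suc k)) * c (Suc k)"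
      using Suc by simp
    also have "\<dots> \<le> E (Suc k) * c (Suc k) + (q (Suc k) - d (Suc k)) * c (Suc k)"
      using E_nonneg[of "Suc k"] c_mono[of k] Suc.prems by (simp add: mult_left_mono)
    also have "\<dots> = E (Suc (Suc k)) * c (Suc k)" by (simp add: E_def algebra_simps)
    finally show ?case .
  qed
  have "(\<Sum>i<n. (q i - d i) * c i) \<le> 0"
  proof (cases n)
    case (Suc m)
    then show ?thesis using abel[of m] total by (simp add: E_def sum_subtractf)
  qed simp
  have "(\<Sum>i<n. q i * log 2 (1 / q i)) \<le> (\<Sum>i<n. q i * c i + (d i - q i) / ln 2)"
    by (rule sum_mono) (use entropy_term_le_cross_entropy_term pos nonneg in \<open>auto simp: c_def\<close>)
  also have "\<dots> = (\<Sum>i<n. q i * c i) + (\<Sum>i<n. d i - q i) / ln 2"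
    by (simp add: sum.distrib sum_divide_distrib)
  also have "\<dots> = (\<Sum>i<n. q i * c i)"
    using total by (simp add: sum_subtractf)
  also have "\<dots> \<le> (\<Sum>i<n. d i * c i)"
    using \<open>(\<Sum>i<n. (q i - d i) * c i) \<le> 0\<close> by (simp add: algebra_simps sum_subtractf)
  finally show ?thesis by (simp add: c_def)
qed

declare meet.simps[simp del]

lemma sum_meet_lessThan:
  assumes "finite S" "S \<noteq> {}"
  shows "(\<Sum>j<k. meet S j) = Min ((\<lambda>p. \<Sum>j<k. p j) ` S)"
proof (cases k)
  case 0
  then show ?thesis using assms by (simp add: image_constant_conv)
next
  case (Suc i)
  have "(\<Sum>j<k. meet S j) = meet S i + (\<Sum>j<i. meet S j)" using Suc by simp
  also have "\<dots> = Min ((\<lambda>p. \<Sum>j\<le>i. p j) ` S)" by (subst meet.simps[of S i]) simp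
  finally show ?thesis using Suc by (simp add: lessThan_Suc_atMost)
qed

lemma meet_nonneg:
  assumes "finite S" "S \<noteq> {}" "\<forall>p\<in>S. \<forall>i. 0 \<le> p i"
  shows "0 \<le> meet S i"
proof -
  have "Min ((\<lambda>p. \<Sum>j<i. p j) ` S) \<le> (\<Sum>j<Suc i. p j)" if "p \<in> S" for p
  proof -
    have "Min ((\<lambda>p. \<Sum>j<i. p j) ` S) \<le> (\<Sum>j<i. p j)" using that assms(1) by simp
    also have "\<dots> \<le> (\<Sum>j<Suc i. p j)" using that assms(3) by simp
    finally show ?thesis .
  qed
  then have "Min ((\<lambda>p. \<Sum>j<i. p j) ` S) \<le> Min ((\<lambda>p. \<Sum>j<Suc i. p j) ` S)"
    using assms by (intro Min.boundedI) auto
  then show ?thesis using sum_meet_lessThan[OF assms(1,2), of i] sum_meet_lessThan[OF assms(1,2), of "Suc i"]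
    by simp
qed

lemma sum_lessThan_le_sum_meet:
  assumes fS: "finite S" and Sne: "S \<noteq> {}" and S: "\<forall>p\<in>S. ppd p \<and> mass p = M"
    and "major_feasible S M d"
  shows "(\<Sum>j<k. d j) \<le> (\<Sum>j<k. meet S j)"
  unfolding sum_meet_lessThan[OF fS Sne]
proof (rule Min.boundedI)
  have d: "ppd d" "mass d = M" and dom: "\<forall>x\<in>{0<..M}. sketch d x \<le> profile S x"
    using assms(4) by (auto simp: major_feasible_def)
  fix a assume "a \<in> (\<lambda>p. \<Sum>j<k. p j) ` S"
  then obtain p where p: "p \<in> S" "a = (\<Sum>j<k. p j)" by blast
  then have "\<forall>x\<in>{0<..mass p}. sketch d x \<le> sketch p x"
    using S dom profile_le_sketch[OF fS] order_trans by fastforce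
  then show "(\<Sum>j<k. d j) \<le> a"
    using sum_lessThan_le_of_sketch_le[OF d(1)] S p d(2) by simp
qed (use fS Sne in auto)

lemma sum_meet_le_mass:
  assumes fS: "finite S" and Sne: "S \<noteq> {}" and S: "\<forall>p\<in>S. ppd p \<and> mass p = M"
  shows "(\<Sum>j<k. meet S j) \<le> M"
proof -
  obtain p where p: "p \<in> S" using Sne by blast
  then have "(\<Sum>j<k. meet S j) \<le> (\<Sum>j<k. p j)"
    unfolding sum_meet_lessThan[OF fS Sne] using fS by simp
  also have "\<dots> \<le> M"
    using sum_lessThan_eq_mass_minus_tail[of p k] tail_nonneg[of p k] S p by simp
  finally show ?thesis .
qed

lemma ent_meet_le_ent:
  assumes fS: "finite S" and Sne: "S \<noteq> {}" and S: "\<forall>p\<in>S. ppd p \<and> mass p = M"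
    and "major_feasible S M d"
  shows "ent (meet S) \<le> ent d"
proof -
  have d: "ppd d" "mass d = M" using assms(4) by (auto simp: major_feasible_def)
  obtain n where pos: "\<And>i. i < n \<Longrightarrow> 0 < d i" and zero: "\<And>i. n \<le> i \<Longrightarrow> d i = 0"
    using ppd_positive_prefix[OF d(1)] by blast
  note prefix = sum_lessThan_le_sum_meet[OF assms]
  have d_total: "(\<Sum>j<k. d j) = M" if "n \<le> k" for k
    using sum_lessThan_eq_mass_minus_tail[OF d(1), of k] tail_eq_0[OF zero that] d(2) by simp
  have total: "(\<Sum>j<k. meet S j) = M" if "n \<le> k" for k
    using sum_meet_le_mass[OF fS Sne S, of k] d_total[OF that] prefix[of k] by linarith
  have "meet S i = 0" if "n \<le> i" for i
    using total[of i] total[of "Suc i"] that by simp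
  then have "ent (meet S) = (\<Sum>i<n. meet S i * log 2 (1 / meet S i))"
    by (rule ent_eq_sum)
  also have "\<dots> \<le> (\<Sum>i<n. d i * log 2 (1 / d i))"
  proof (rule sum_entropy_le_of_majorized)
    show "d (Suc i) \<le> d i" for i using d(1) by (simp add: ppd_def)
    show "0 \<le> meet S i" for i using meet_nonneg[OF fS Sne] S by (simp add: ppd_def)
    show "(\<Sum>i<n. meet S i) = (\<Sum>i<n. d i)"
      using total[of n] d_total[of n] by simp
  qed (simp_all add: pos prefix)
  also have "\<dots> = ent d" by (rule ent_eq_sum[symmetric]) (rule zero)
  finally show ?thesis .
qed

theorem theorem4:
  fixes S :: "(nat \<Rightarrow> real) set" and M :: real
    and C :: "((nat \<Rightarrow> real) \<Rightarrow> nat) \<Rightarrow> real" and d :: "nat \<Rightarrow> real"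
  assumes "finite S" and "S \<noteq> {}"
    and "\<forall>p\<in>S. ppd p \<and> mass p = M"
    and "is_coupling S C"
    and "\<forall>C'. is_coupling S C' \<longrightarrow> ent C \<le> ent C'"
    and "major_feasible S M d"
    and "\<forall>d'. major_feasible S M d' \<longrightarrow> ent d \<le> ent d'"
  shows "ent C \<ge> ent d \<and> ent d \<ge> max (profile_entropy S M) (ent (meet S))"
proof -
  have "ent d \<le> ent (decreasing_rearrangement C)"
    using assms(7) major_feasible_decreasing_rearrangement[OF assms(1-4)] by blast
  also have "\<dots> = ent C"
    using ent_decreasing_rearrangement finite_coupling_support[OF assms(4,1)] assms(3) by blast
  finally have "ent d \<le> ent C" .
  moreover have "profile_entropy S M \<le> ent d"
    using profile_entropy_le_ent assms(1-3,6) by blast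
  moreover have "ent (meet S) \<le> ent d"
    using ent_meet_le_ent[OF assms(1-3,6)] .
  ultimately show ?thesis by simp
qed

end
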